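(* Let $0\le q\in L_1^{loc}(\mathbb{R})$ and assume there is $a\in(0,\infty)$ with $\inf_{x\in\mathbb{R}}\int_{x-a}^{x+a}q(t)\,dt>0$. Let $\lambda\in(0,\infty)$, $p\in[1,\infty]$, and let $(L+\lambda E)^{-1}$ be the operator on $L_p(\mathbb{R})$ given by $$\big((L+\lambda E)^{-1}f\big)(x)=\int_x^\infty e^{-\int_x^t(q(\xi)+\lambda)d\xi}f(t)\,dt,\quad x\in\mathbb{R}.$$ Then there is $\delta(\lambda)>0$ such that $\|(L+\lambda E)^{-1}\|_{L_p\to L_p}\le\frac{1}{\lambda+\delta(\lambda)}$.
   Context: $L_\infty(\mathbb{R})$ denotes $C(\mathbb{R})$, bounded continuous functions with the sup norm. $E$ is the identity operator and $L=-\frac{d}{dx}+q(x)$. *)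

theory Defs
  imports "HOL-Analysis.Analysis"
begin

definition in_Lp :: "real \<Rightarrow> (real \<Rightarrow> real) \<Rightarrow> bool" where
  "in_Lp p f \<longleftrightarrow> f \<in> borel_measurable lborel \<and> integrable lborel (\<lambda>x. \<bar>f x\<bar> powr p)"

definition Lp_norm :: "real \<Rightarrow> (real \<Rightarrow> real) \<Rightarrow> real" where
  "Lp_norm p f = (\<integral>x. \<bar>f x\<bar> powr p \<partial>lborel) powr (1 / p)"

text \<open>The space denoted L_infinity in the paper: bounded continuous functions, sup norm.\<close>
definition in_Cb :: "(real \<Rightarrow> real) \<Rightarrow> bool" where
  "in_Cb f \<longleftrightarrow> continuous_on UNIV f \<and> bounded (range f)"

definition sup_norm :: "(real \<Rightarrow> real) \<Rightarrow> real" where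
  "sup_norm f = (SUP x. \<bar>f x\<bar>)"

definition resolv :: "(real \<Rightarrow> real) \<Rightarrow> real \<Rightarrow> (real \<Rightarrow> real) \<Rightarrow> real \<Rightarrow> real" where
  "resolv q lam f x =
     (LINT t:{x..}|lborel. exp (- (LINT \<xi>:{x..t}|lborel. q \<xi> + lam)) * f t)"

end

theory Submission
  imports Defs
begin

text \<open>
  As q has mass at least
  c = inf (\<integral> q over [y - a, y + a]) on every interval of length 2a, the kernel is at most
  exp (- lam (t - x)), and at most exp (- c - lam (t - x)) once t - x \<ge> 2a. So every row and every
  column of the kernel has integral at most M = (1 - (1 - exp (- c)) exp (- 2 a lam)) / lam < 1 / lam,
  and the Schur test (Jensen's inequality along rows, Tonelli along columns) bounds the resolvent
  by M both on L_p and on bounded continuous functions. Take \<delta> = 1 / M - lam.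
\<close>

lemma integral_exp_minus_atLeast:
  fixes lam b :: real assumes "lam > 0"
  shows "integrable lborel (\<lambda>s. indicator {b..} s * exp (- (lam * s)))"
    and "(\<integral>s. indicator {b..} s * exp (- (lam * s)) \<partial>lborel) = exp (- (lam * b)) / lam"
proof -
  have "(\<lambda>s. indicator {b..} s * exp (- (lam * s))) = (\<lambda>s. if s \<in> {b..} then exp (- (lam * s)) else 0)"
    by (auto simp: indicator_def)
  moreover have "((\<lambda>s. exp (- (lam * s))) has_integral exp (- (lam * b)) / lam) {b..}"
    using has_integral_exp_minus_to_infinity[OF assms, of b] by simp
  ultimately have "((\<lambda>s. indicator {b..} s * exp (- (lam * s))) has_integral exp (- (lam * b)) / lam) UNIV"
    by (simp only: has_integral_restrict_UNIV)
  then have nn: "(\<integral>\<^sup>+s. indicator {b..} s * exp (- (lam * s)) \<partial>lborel) = exp (- (lam * b)) / lam"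
    by (intro nn_integral_has_integral_lborel) auto
  show int: "integrable lborel (\<lambda>s. indicator {b..} s * exp (- (lam * s)))"
    using nn by (intro integrableI_nn_integral_finite) auto
  show "(\<integral>s. indicator {b..} s * exp (- (lam * s)) \<partial>lborel) = exp (- (lam * b)) / lam"
    using nn int assms by (subst integral_eq_nn_integral) auto
qed

lemma isCont_integral_indicator_atLeast:
  fixes g :: "real \<Rightarrow> real"
  assumes g: "integrable lborel g"
  shows "isCont (\<lambda>x. \<integral>t. indicator {x..} t * g t \<partial>lborel) x0"
proof (rule continuous_at_sequentiallyI)
  fix u :: "nat \<Rightarrow> real" assume u: "u \<longlonglongrightarrow> x0"
  have [measurable]: "g \<in> borel_measurable lborel" using g by auto
  show "(\<lambda>n. \<integral>t. indicator {u n..} t * g t \<partial>lborel) \<longlonglongrightarrow> (\<integral>t. indicator {x0..} t * g t \<partial>lborel)"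
  proof (rule integral_dominated_convergence[where w="\<lambda>t. \<bar>g t\<bar>"])
    show "AE t in lborel. (\<lambda>n. indicator {u n..} t * g t) \<longlonglongrightarrow> indicator {x0..} t * g t"
      using AE_lborel_singleton[of x0]
    proof eventually_elim
      case (elim t)
      then consider (left) "t < x0" | (right) "x0 < t" by linarith
      then have "eventually (\<lambda>n. indicator {u n..} t * g t = indicator {x0..} t * g t) sequentially"
      proof cases
        case left
        from order_tendstoD(1)[OF u this] show ?thesis by eventually_elim (use left in auto)
      next
        case right
        from order_tendstoD(2)[OF u this] show ?thesis by eventually_elim (use right in auto)
      qed
      then show ?case by (rule tendsto_eventually)
    qed
  qed (use g in \<open>auto simp: indicator_def\<close>)
qed

lemma isCont_integral_indicator_atMost:
  fixes g :: "real \<Rightarrow> real"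
  assumes g: "integrable lborel g"
  shows "isCont (\<lambda>x. \<integral>t. indicator {..x} t * g t \<partial>lborel) x0"
proof -
  have reflect: "(\<integral>t. indicator {..x} t * g t \<partial>lborel) = (\<integral>s. indicator {-x..} s * g (- s) \<partial>lborel)" for x
    using lborel_integral_real_affine[of "-1" "\<lambda>t. indicator {..x} t * g t" 0]
    by (simp add: indicator_def minus_le_iff)
  have "integrable lborel (\<lambda>s. g (- s))"
    using lborel_integrable_real_affine[OF g, of "-1" 0] by simp
  from isCont_integral_indicator_atLeast[OF this, of "- x0"]
  have "isCont ((\<lambda>y. \<integral>s. indicator {y..} s * g (- s) \<partial>lborel) \<circ> uminus) x0"
    by (intro continuous_at_compose) auto
  then show ?thesis by (simp add: reflect o_def)
qed

lemma powr_ge_tangent: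
  fixes y m p :: real assumes "y \<ge> 0" and "m > 0" and "p \<ge> 1"
  shows "m powr p + p * m powr (p - 1) * (y - m) \<le> y powr p"
proof (cases "y = 0")
  case True
  have "m powr p + p * m powr (p - 1) * (y - m) = (1 - p) * m powr p"
    using True \<open>m > 0\<close> powr_mult_base[of m "p - 1"] by (simp add: algebra_simps)
  also have "\<dots> \<le> y powr p" using True \<open>p \<ge> 1\<close> by (simp add: mult_nonpos_nonneg)
  finally show ?thesis .
next
  case False
  have "p * m powr (p - 1) * (y - m) \<le> y powr p - m powr p"
  proof (rule convex_on_imp_above_tangent[OF powr_convex[OF \<open>p \<ge> 1\<close>]])
    show "((\<lambda>x. x powr p) has_field_derivative p * m powr (p - 1)) (at m within {0<..})"
      by (rule has_field_derivative_at_within[OF has_real_derivative_powr[OF \<open>m > 0\<close>]])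
  qed (use False assms in \<open>auto simp: interior_open\<close>)
  then show ?thesis by simp
qed

lemma weighted_integral_powr_le:
  fixes k g :: "'a \<Rightarrow> real" and \<mu> :: "'a measure"
  assumes k_nonneg: "\<And>t. k t \<ge> 0" and g_nonneg: "\<And>t. g t \<ge> 0"
    and "integrable \<mu> k" "integrable \<mu> (\<lambda>t. k t * g t)" "integrable \<mu> (\<lambda>t. k t * g t powr p)"
    and mass: "(\<integral>t. k t \<partial>\<mu>) \<le> M" and "M > 0" and "p \<ge> 1"
  shows "(\<integral>t. k t * g t \<partial>\<mu>) powr p \<le> M powr (p - 1) * (\<integral>t. k t * g t powr p \<partial>\<mu>)"
proof -
  define A where "A = (\<integral>t. k t * g t \<partial>\<mu>)"
  define W where "W = (\<integral>t. k t \<partial>\<mu>)"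
  have "A \<ge> 0" unfolding A_def using k_nonneg g_nonneg by simp
  show ?thesis
  proof (cases "A = 0")
    case True
    then show ?thesis using k_nonneg unfolding A_def by simp
  next
    case False
    define m where "m = A / M"
    have "m > 0" unfolding m_def using False \<open>A \<ge> 0\<close> \<open>M > 0\<close> by simp
    have m_pred: "m powr (p - 1) * m = m powr p"
      using powr_mult_base[of m "p - 1"] \<open>m > 0\<close> by (simp add: mult.commute)
    \<comment> \<open>Jensen: integrate the tangent line of the convex map y \<mapsto> y powr p at the mean m\<close>
    have tangent: "(\<lambda>t. k t * (m powr p + p * m powr (p - 1) * (g t - m)))
        = (\<lambda>t. (m powr p - p * m powr (p - 1) * m) * k t + p * m powr (p - 1) * (k t * g t))"
      by (auto simp: algebra_simps)
    have "integrable \<mu> (\<lambda>t. k t * (m powr p + p * m powr (p - 1) * (g t - m)))"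
      unfolding tangent using assms by simp
    then have "(\<integral>t. k t * (m powr p + p * m powr (p - 1) * (g t - m)) \<partial>\<mu>) \<le> (\<integral>t. k t * g t powr p \<partial>\<mu>)"
      using assms \<open>m > 0\<close> by (intro integral_mono mult_left_mono powr_ge_tangent) auto
    also have "(\<integral>t. k t * (m powr p + p * m powr (p - 1) * (g t - m)) \<partial>\<mu>)
        = (m powr p - p * m powr (p - 1) * m) * W + p * m powr (p - 1) * A"
      unfolding tangent A_def W_def using assms by simp
    also have "\<dots> = m powr p * W - p * (m powr (p - 1) * m) * W + p * (m powr (p - 1) * m) * M"
      using \<open>M > 0\<close> unfolding m_def by (simp add: algebra_simps)
    also have "\<dots> = m powr p * (W + p * (M - W))"
      unfolding m_pred by (simp add: algebra_simps)
    finally have "m powr p * (W + p * (M - W)) \<le> (\<integral>t. k t * g t powr p \<partial>\<mu>)" .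
    moreover have "0 \<le> (p - 1) * (M - W)"
      using mass \<open>p \<ge> 1\<close> unfolding W_def by simp
    then have "m powr p * M \<le> m powr p * (W + p * (M - W))"
      by (intro mult_left_mono) (simp_all add: algebra_simps)
    ultimately have key: "m powr p * M \<le> (\<integral>t. k t * g t powr p \<partial>\<mu>)" by linarith
    have "A powr p = m powr p * M powr p"
      using \<open>m > 0\<close> \<open>M > 0\<close> powr_mult[of m M p] unfolding m_def by simp
    also have "\<dots> = M powr (p - 1) * (m powr p * M)"
      using powr_mult_base[of M "p - 1"] \<open>M > 0\<close> by (simp add: ac_simps)
    also have "\<dots> \<le> M powr (p - 1) * (\<integral>t. k t * g t powr p \<partial>\<mu>)"
      using key by (intro mult_left_mono) auto
    finally show ?thesis unfolding A_def .
  qed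
qed

lemma nn_integral_kernel_le:
  fixes K :: "real \<Rightarrow> real \<Rightarrow> real" and g :: "real \<Rightarrow> ennreal"
  assumes [measurable]: "(\<lambda>(x, t). K x t) \<in> borel_measurable (lborel \<Otimes>\<^sub>M lborel)"
    and [measurable]: "g \<in> borel_measurable lborel"
    and column: "\<And>t. (\<integral>\<^sup>+x. ennreal (K x t) \<partial>lborel) \<le> ennreal M"
  shows "(\<integral>\<^sup>+x. \<integral>\<^sup>+t. ennreal (K x t) * g t \<partial>lborel \<partial>lborel) \<le> ennreal M * (\<integral>\<^sup>+t. g t \<partial>lborel)"
proof -
  have "(\<integral>\<^sup>+x. \<integral>\<^sup>+t. ennreal (K x t) * g t \<partial>lborel \<partial>lborel)
      = (\<integral>\<^sup>+t. \<integral>\<^sup>+x. ennreal (K x t) * g t \<partial>lborel \<partial>lborel)"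
    by (rule lborel_pair.Fubini'[symmetric]) measurable
  also have "\<dots> = (\<integral>\<^sup>+t. (\<integral>\<^sup>+x. ennreal (K x t) \<partial>lborel) * g t \<partial>lborel)"
    by (intro nn_integral_cong nn_integral_multc) measurable
  also have "\<dots> \<le> (\<integral>\<^sup>+t. ennreal M * g t \<partial>lborel)"
    by (intro nn_integral_mono mult_right_mono column) auto
  also have "\<dots> = ennreal M * (\<integral>\<^sup>+t. g t \<partial>lborel)"
    by (rule nn_integral_cmult) measurable
  finally show ?thesis .
qed

lemma abs_kernel_integral_powr_le:
  fixes K :: "real \<Rightarrow> real \<Rightarrow> real" and f :: "real \<Rightarrow> real"
  assumes [measurable]: "K x \<in> borel_measurable lborel" "f \<in> borel_measurable lborel"
    and K_nonneg: "\<And>t. K x t \<ge> 0"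
    and row_int: "integrable lborel (K x)" and "(\<integral>t. K x t \<partial>lborel) \<le> M"
    and int_p: "integrable lborel (\<lambda>t. K x t * \<bar>f t\<bar> powr p)"
    and "M > 0" and "p \<ge> 1"
  shows "\<bar>\<integral>t. K x t * f t \<partial>lborel\<bar> powr p \<le> M powr (p - 1) * (\<integral>t. K x t * \<bar>f t\<bar> powr p \<partial>lborel)"
proof -
  \<comment> \<open>y \<le> 1 + y powr p splits K x t * \<bar>f t\<bar> into two integrable parts\<close>
  have "\<bar>f t\<bar> \<le> 1 + \<bar>f t\<bar> powr p" for t
  proof (cases "\<bar>f t\<bar> \<le> 1")
    case True
    then show ?thesis using powr_ge_zero[of "\<bar>f t\<bar>" p] by linarith
  next
    case False
    then have "\<bar>f t\<bar> powr 1 \<le> \<bar>f t\<bar> powr p" using \<open>p \<ge> 1\<close> by (intro powr_mono) auto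
    then show ?thesis using False by simp
  qed
  then have "K x t * \<bar>f t\<bar> \<le> K x t * (1 + \<bar>f t\<bar> powr p)" for t
    using K_nonneg by (intro mult_left_mono)
  then have int_1: "integrable lborel (\<lambda>t. K x t * \<bar>f t\<bar>)"
    using K_nonneg
    by (intro Bochner_Integration.integrable_bound[OF Bochner_Integration.integrable_add[OF row_int int_p]] AE_I2)
      (auto simp: abs_mult algebra_simps)
  have "\<bar>\<integral>t. K x t * f t \<partial>lborel\<bar> \<le> (\<integral>t. K x t * \<bar>f t\<bar> \<partial>lborel)"
    using integral_norm_bound[of lborel "\<lambda>t. K x t * f t"] K_nonneg by (simp add: abs_mult)
  then have "\<bar>\<integral>t. K x t * f t \<partial>lborel\<bar> powr p \<le> (\<integral>t. K x t * \<bar>f t\<bar> \<partial>lborel) powr p"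
    using \<open>p \<ge> 1\<close> by (intro powr_mono2) auto
  also have "\<dots> \<le> M powr (p - 1) * (\<integral>t. K x t * \<bar>f t\<bar> powr p \<partial>lborel)"
    using assms int_1 by (intro weighted_integral_powr_le) auto
  finally show ?thesis .
qed

lemma nn_integral_kernel_operator_powr_le:
  fixes K :: "real \<Rightarrow> real \<Rightarrow> real" and f :: "real \<Rightarrow> real"
  assumes [measurable]: "(\<lambda>(x, t). K x t) \<in> borel_measurable (lborel \<Otimes>\<^sub>M lborel)"
    and [measurable]: "f \<in> borel_measurable lborel"
    and K_nonneg: "\<And>x t. K x t \<ge> 0"
    and "\<And>x. integrable lborel (K x)" and "\<And>x. (\<integral>t. K x t \<partial>lborel) \<le> M"
    and column: "\<And>t. (\<integral>\<^sup>+x. ennreal (K x t) \<partial>lborel) \<le> ennreal M"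
    and int_p: "\<And>x. integrable lborel (\<lambda>t. K x t * \<bar>f t\<bar> powr p)"
    and f_int: "integrable lborel (\<lambda>t. \<bar>f t\<bar> powr p)"
    and "M > 0" and "p \<ge> 1"
  shows "(\<integral>\<^sup>+x. \<bar>\<integral>t. K x t * f t \<partial>lborel\<bar> powr p \<partial>lborel)
    \<le> ennreal (M powr p * (\<integral>t. \<bar>f t\<bar> powr p \<partial>lborel))"
proof -
  have "(\<integral>\<^sup>+x. \<bar>\<integral>t. K x t * f t \<partial>lborel\<bar> powr p \<partial>lborel)
      \<le> (\<integral>\<^sup>+x. ennreal (M powr (p - 1)) * (\<integral>\<^sup>+t. ennreal (K x t) * (\<bar>f t\<bar> powr p) \<partial>lborel) \<partial>lborel)"
  proof (intro nn_integral_mono)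
    fix x
    have "ennreal (\<bar>\<integral>t. K x t * f t \<partial>lborel\<bar> powr p)
        \<le> ennreal (M powr (p - 1) * (\<integral>t. K x t * \<bar>f t\<bar> powr p \<partial>lborel))"
      using assms by (intro ennreal_leI abs_kernel_integral_powr_le) auto
    also have "\<dots> = ennreal (M powr (p - 1)) * ennreal (\<integral>t. K x t * \<bar>f t\<bar> powr p \<partial>lborel)"
      using K_nonneg by (intro ennreal_mult) auto
    also have "ennreal (\<integral>t. K x t * \<bar>f t\<bar> powr p \<partial>lborel) = (\<integral>\<^sup>+t. ennreal (K x t * \<bar>f t\<bar> powr p) \<partial>lborel)"
      using int_p K_nonneg by (intro nn_integral_eq_integral[symmetric]) auto
    also have "\<dots> = (\<integral>\<^sup>+t. ennreal (K x t) * (\<bar>f t\<bar> powr p) \<partial>lborel)"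
      using K_nonneg by (simp add: ennreal_mult)
    finally show "ennreal (\<bar>\<integral>t. K x t * f t \<partial>lborel\<bar> powr p)
        \<le> ennreal (M powr (p - 1)) * (\<integral>\<^sup>+t. ennreal (K x t) * (\<bar>f t\<bar> powr p) \<partial>lborel)" .
  qed
  also have "\<dots> = ennreal (M powr (p - 1)) * (\<integral>\<^sup>+x. \<integral>\<^sup>+t. ennreal (K x t) * (\<bar>f t\<bar> powr p) \<partial>lborel \<partial>lborel)"
    by (rule nn_integral_cmult) measurable
  also have "\<dots> \<le> ennreal (M powr (p - 1)) * (ennreal M * (\<integral>\<^sup>+t. \<bar>f t\<bar> powr p \<partial>lborel))"
    by (intro mult_left_mono nn_integral_kernel_le column) auto
  also have "\<dots> = ennreal (M powr p * (\<integral>t. \<bar>f t\<bar> powr p \<partial>lborel))"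
    using f_int \<open>M > 0\<close> powr_mult_base[of M "p - 1"]
    by (simp add: nn_integral_eq_integral ennreal_mult[symmetric] mult.assoc mult.commute[of M])
  finally show ?thesis .
qed

lemma Lp_norm_kernel_operator_le:
  fixes K :: "real \<Rightarrow> real \<Rightarrow> real" and f :: "real \<Rightarrow> real"
  assumes [measurable]: "(\<lambda>(x, t). K x t) \<in> borel_measurable (lborel \<Otimes>\<^sub>M lborel)"
    and K_nonneg: "\<And>x t. K x t \<ge> 0" and K_le: "\<And>x t. K x t \<le> B"
    and "\<And>x. integrable lborel (K x)" and "\<And>x. (\<integral>t. K x t \<partial>lborel) \<le> M"
    and "\<And>t. (\<integral>\<^sup>+x. ennreal (K x t) \<partial>lborel) \<le> ennreal M"
    and "M > 0" and "p \<ge> 1" and f: "in_Lp p f"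
  shows "in_Lp p (\<lambda>x. \<integral>t. K x t * f t \<partial>lborel)
    \<and> Lp_norm p (\<lambda>x. \<integral>t. K x t * f t \<partial>lborel) \<le> M * Lp_norm p f"
proof -
  have [measurable]: "f \<in> borel_measurable lborel" and f_int: "integrable lborel (\<lambda>t. \<bar>f t\<bar> powr p)"
    using f unfolding in_Lp_def by auto
  define R where "R x = (\<integral>t. K x t * f t \<partial>lborel)" for x
  have [measurable]: "R \<in> borel_measurable lborel" unfolding R_def by measurable
  have int_p: "integrable lborel (\<lambda>t. K x t * \<bar>f t\<bar> powr p)" for x
    using K_nonneg order_trans[OF K_le abs_ge_self]
    by (intro Bochner_Integration.integrable_bound[OF integrable_mult_left[OF f_int, of B]] AE_I2)
      (auto simp: abs_mult mult.commute[of _ "\<bar>B\<bar>"] intro!: mult_right_mono)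
  define I where "I = (\<integral>t. \<bar>f t\<bar> powr p \<partial>lborel)"
  have "I \<ge> 0" unfolding I_def by simp
  have nn: "(\<integral>\<^sup>+x. \<bar>R x\<bar> powr p \<partial>lborel) \<le> ennreal (M powr p * I)"
    unfolding R_def I_def using assms f_int int_p by (intro nn_integral_kernel_operator_powr_le) auto
  then have R_int: "integrable lborel (\<lambda>x. \<bar>R x\<bar> powr p)"
    by (intro integrableI_bounded) (auto intro: le_less_trans)
  have "(\<integral>x. \<bar>R x\<bar> powr p \<partial>lborel) \<le> M powr p * I"
    using nn R_int \<open>I \<ge> 0\<close> by (subst (asm) nn_integral_eq_integral) auto
  then have "Lp_norm p R \<le> (M powr p * I) powr (1 / p)"
    unfolding Lp_norm_def using \<open>p \<ge> 1\<close> by (intro powr_mono2) auto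
  also have "\<dots> = M * Lp_norm p f"
    using \<open>M > 0\<close> \<open>I \<ge> 0\<close> \<open>p \<ge> 1\<close> unfolding Lp_norm_def I_def by (simp add: powr_mult powr_powr)
  finally show ?thesis using R_int unfolding in_Lp_def R_def by simp
qed
lemma kernel_integral_bounded:
  fixes K :: "real \<Rightarrow> real \<Rightarrow> real" and f :: "real \<Rightarrow> real"
  assumes [measurable]: "K x \<in> borel_measurable lborel" "f \<in> borel_measurable lborel"
    and K_nonneg: "\<And>t. K x t \<ge> 0"
    and row_int: "integrable lborel (K x)" and row: "(\<integral>t. K x t \<partial>lborel) \<le> M"
    and f_bound: "\<And>t. \<bar>f t\<bar> \<le> S"
  shows "integrable lborel (\<lambda>t. K x t * f t)" and "\<bar>\<integral>t. K x t * f t \<partial>lborel\<bar> \<le> M * S"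
proof -
  have "S \<ge> 0" using f_bound[of 0] by linarith
  have bound: "\<bar>K x t * f t\<bar> \<le> S * K x t" for t
    using mult_left_mono[OF f_bound K_nonneg] by (simp add: abs_mult K_nonneg mult.commute)
  show int: "integrable lborel (\<lambda>t. K x t * f t)"
    using bound by (intro Bochner_Integration.integrable_bound[OF integrable_mult_right[OF row_int, of S]] AE_I2)
      (auto intro: order_trans[OF _ abs_ge_self])
  have "\<bar>\<integral>t. K x t * f t \<partial>lborel\<bar> \<le> (\<integral>t. S * K x t \<partial>lborel)"
    using int row_int bound by (intro integral_abs_bound_integral) auto
  also have "\<dots> \<le> S * M" using row \<open>S \<ge> 0\<close> by (simp add: mult_left_mono)
  finally show "\<bar>\<integral>t. K x t * f t \<partial>lborel\<bar> \<le> M * S" by (simp add: mult.commute)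
qed

locale uniformly_positive_potential =
  fixes q :: "real \<Rightarrow> real" and a lam :: real
  assumes q_nonneg: "\<And>x. q x \<ge> 0"
    and q_loc: "\<And>s t. set_integrable lborel {s..t} q"
    and a_pos: "a > 0"
    and inf_mass_pos: "(INF x. (LINT t:{x-a..x+a}|lborel. q t)) > 0"
    and lam_pos: "lam > 0"
begin

definition min_mass :: real where
  "min_mass = (INF x. (LINT t:{x-a..x+a}|lborel. q t))"

definition primitive :: "real \<Rightarrow> real" where
  "primitive x = (LBINT \<xi>=ereal 0..ereal x. q \<xi> + lam)"

definition kernel :: "real \<Rightarrow> real \<Rightarrow> real" where
  "kernel x t = (if x \<le> t then exp (primitive x - primitive t) else 0)"

\<comment> \<open>exp (- lam * s) on [0, 2a) and exp (- min_mass - lam * s) beyond, written as a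
  difference of two exponential tails so that its integral is elementary\<close>
definition majorant :: "real \<Rightarrow> real" where
  "majorant s = indicator {0..} s * exp (- (lam * s))
     - (1 - exp (- min_mass)) * (indicator {2 * a..} s * exp (- (lam * s)))"

definition kernel_mass :: real where
  "kernel_mass = (1 - (1 - exp (- min_mass)) * exp (- (lam * (2 * a)))) / lam"

lemma min_mass_pos: "min_mass > 0"
  using inf_mass_pos unfolding min_mass_def .

lemma set_integral_q_nonneg: "(LINT \<xi>:A|lborel. q \<xi>) \<ge> 0"
  unfolding set_lebesgue_integral_def using q_nonneg
  by (intro Bochner_Integration.integral_nonneg) (auto simp: indicator_def)

lemma set_integrable_q_plus_lam: "set_integrable lborel {s..t} (\<lambda>\<xi>. q \<xi> + lam)"
proof -
  have "set_integrable lborel {s..t} (\<lambda>\<xi>. lam)"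
    by (rule borel_integrable_atLeastAtMost') auto
  then show ?thesis using q_loc by auto
qed

lemma set_integral_q_plus_lam:
  assumes "x \<le> t"
  shows "(LINT \<xi>:{x..t}|lborel. q \<xi> + lam) = (LINT \<xi>:{x..t}|lborel. q \<xi>) + lam * (t - x)"
proof -
  have "set_integrable lborel {x..t} (\<lambda>\<xi>. lam)"
    by (rule borel_integrable_atLeastAtMost') auto
  then show ?thesis
    using assms by (subst set_integral_add(2)[OF q_loc]) (auto simp: set_integral_const)
qed

lemma primitive_diff:
  assumes "x \<le> t"
  shows "primitive t - primitive x = (LINT \<xi>:{x..t}|lborel. q \<xi> + lam)"
proof -
  have integrable: "interval_lebesgue_integrable lborel (ereal u) (ereal v) (\<lambda>\<xi>. q \<xi> + lam)"
    if "u \<le> v" for u v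
    using that unfolding interval_lebesgue_integrable_def
    by (auto intro: set_integrable_subset[OF set_integrable_q_plus_lam[of u v]])
  have min: "min (ereal 0) (min (ereal x) (ereal t)) = ereal (min 0 (min x t))"
    and max: "max (ereal 0) (max (ereal x) (ereal t)) = ereal (max 0 (max x t))"
    by (simp_all add: min_def max_def)
  have "(LBINT \<xi>=ereal 0..ereal x. q \<xi> + lam) + (LBINT \<xi>=ereal x..ereal t. q \<xi> + lam)
      = (LBINT \<xi>=ereal 0..ereal t. q \<xi> + lam)"
    by (intro interval_integral_sum) (simp only: min max, rule integrable, simp)
  moreover have "(LBINT \<xi>=ereal x..ereal t. q \<xi> + lam) = (LINT \<xi>:{x..t}|lborel. q \<xi> + lam)"
    using assms by (rule interval_integral_Icc)
  ultimately show ?thesis unfolding primitive_def by simp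
qed

lemma primitive_diff_ge:
  assumes "x \<le> t"
  shows "primitive t - primitive x \<ge> lam * (t - x) + (if 2 * a \<le> t - x then min_mass else 0)"
proof -
  have "min_mass \<le> (LINT \<xi>:{(x+a)-a..(x+a)+a}|lborel. q \<xi>)"
    unfolding min_mass_def
    by (rule cINF_lower) (auto intro!: bdd_belowI[where m=0] set_integral_q_nonneg)
  also have "\<dots> \<le> (LINT \<xi>:{x..t}|lborel. q \<xi>)" if "2 * a \<le> t - x"
    using q_loc[of x "2 * a + x"] q_loc[of x t] q_nonneg that
    unfolding set_integrable_def set_lebesgue_integral_def
    by (intro integral_mono) (auto simp: indicator_def)
  finally show ?thesis
    using primitive_diff[OF assms] set_integral_q_plus_lam[OF assms] set_integral_q_nonneg[of "{x..t}"]
    by auto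
qed

lemma primitive_mono: "x \<le> t \<Longrightarrow> primitive x \<le> primitive t"
  using primitive_diff_ge[of x t] lam_pos min_mass_pos
  by (smt (verit) mult_nonneg_nonneg)

lemma isCont_primitive: "isCont primitive x0"
proof -
  define g where "g t = indicator {x0-1..x0+1} t * (q t + lam)" for t
  have "integrable lborel g"
    using set_integrable_q_plus_lam[of "x0-1" "x0+1"] unfolding g_def set_integrable_def by simp
  then have "isCont (\<lambda>x. primitive (x0-1) + (\<integral>t. indicator {..x} t * g t \<partial>lborel)) x0"
    by (intro continuous_intros isCont_integral_indicator_atMost)
  moreover have "eventually (\<lambda>x. x \<in> {x0-1<..<x0+1}) (nhds x0)"
    by (rule eventually_nhds_in_open) auto
  then have "eventually (\<lambda>x. primitive x = primitive (x0-1) + (\<integral>t. indicator {..x} t * g t \<partial>lborel)) (nhds x0)"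
  proof eventually_elim
    case (elim x)
    have "primitive x - primitive (x0-1) = (LINT \<xi>:{x0-1..x}|lborel. q \<xi> + lam)"
      using primitive_diff[of "x0-1" x] elim by simp
    also have "\<dots> = (\<integral>t. indicator {..x} t * g t \<partial>lborel)"
      unfolding set_lebesgue_integral_def g_def
      using elim by (intro Bochner_Integration.integral_cong) (auto simp: indicator_def)
    finally show ?case by simp
  qed
  ultimately show ?thesis by (subst isCont_cong) auto
qed

lemma primitive_measurable [measurable]: "primitive \<in> borel_measurable borel"
  using isCont_primitive by (intro borel_measurable_continuous_onI continuous_at_imp_continuous_on) auto

lemma kernel_measurable [measurable]: "(\<lambda>(x, t). kernel x t) \<in> borel_measurable (lborel \<Otimes>\<^sub>M lborel)"
  unfolding kernel_def by measurable

lemma kernel_nonneg: "kernel x t \<ge> 0"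
  by (simp add: kernel_def)

lemma kernel_le_one: "kernel x t \<le> 1"
  using primitive_mono[of x t] by (simp add: kernel_def)

lemma kernel_le_majorant: "kernel x t \<le> majorant (t - x)"
proof (cases "x \<le> t")
  case True
  then have "kernel x t \<le> exp (- (lam * (t - x)) - (if 2 * a \<le> t - x then min_mass else 0))"
    using primitive_diff_ge[OF True] by (simp add: kernel_def)
  also have "\<dots> = majorant (t - x)"
  proof (cases "2 * a \<le> t - x")
    case far: True
    have "exp (- (lam * (t - x)) - min_mass) = exp (- (lam * (t - x))) * exp (- min_mass)"
      by (simp flip: exp_add)
    then show ?thesis using True far by (simp add: majorant_def algebra_simps)
  qed (use True in \<open>simp add: majorant_def\<close>)
  finally show ?thesis .
qed (use a_pos in \<open>simp add: kernel_def majorant_def\<close>)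

lemma majorant_nonneg: "majorant s \<ge> 0"
  using kernel_nonneg[of 0 s] kernel_le_majorant[of 0 s] by simp

lemma integrable_majorant: "integrable lborel majorant"
  unfolding majorant_def using integral_exp_minus_atLeast(1)[OF lam_pos] by simp

lemma majorant_measurable [measurable]: "majorant \<in> borel_measurable borel"
  unfolding majorant_def by measurable

lemma integral_majorant: "(\<integral>s. majorant s \<partial>lborel) = kernel_mass"
  unfolding majorant_def kernel_mass_def
  using integral_exp_minus_atLeast[OF lam_pos, of 0] integral_exp_minus_atLeast[OF lam_pos, of "2 * a"]
  by (simp add: diff_divide_distrib)

lemma kernel_mass_pos: "kernel_mass > 0"
proof -
  have "(1 - exp (- min_mass)) * exp (- (lam * (2 * a))) < 1 * 1"
    using min_mass_pos a_pos lam_pos by (intro mult_strict_mono) auto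
  then show ?thesis unfolding kernel_mass_def using lam_pos by simp
qed

lemma kernel_mass_less: "kernel_mass < 1 / lam"
proof -
  have "0 < (1 - exp (- min_mass)) * exp (- (lam * (2 * a)))"
    using min_mass_pos by (intro mult_pos_pos) auto
  then show ?thesis
    unfolding kernel_mass_def using lam_pos by (intro divide_strict_right_mono) auto
qed

lemma majorant_shift:
  shows "integrable lborel (\<lambda>t. majorant (t - x))" and "(\<integral>t. majorant (t - x) \<partial>lborel) = kernel_mass"
proof -
  have shift: "(\<lambda>t. majorant (- x + 1 * t)) = (\<lambda>t. majorant (t - x))" by simp
  show "integrable lborel (\<lambda>t. majorant (t - x))"
    using lborel_integrable_real_affine[OF integrable_majorant, of 1 "- x"] unfolding shift by simp
  show "(\<integral>t. majorant (t - x) \<partial>lborel) = kernel_mass"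
    using lborel_integral_real_affine[of 1 majorant "- x"] integral_majorant unfolding shift by simp
qed

lemma integrable_kernel: "integrable lborel (kernel x)"
proof (rule Bochner_Integration.integrable_bound[OF majorant_shift(1)])
  show "AE t in lborel. norm (kernel x t) \<le> norm (majorant (t - x))"
    using kernel_nonneg[of x] kernel_le_majorant[of x] by (intro AE_I2) (metis abs_of_nonneg order_trans real_norm_def)
qed simp

lemma integral_kernel_le: "(\<integral>t. kernel x t \<partial>lborel) \<le> kernel_mass"
  using integral_mono[OF integrable_kernel majorant_shift(1) kernel_le_majorant] majorant_shift(2)
  by simp

lemma nn_integral_kernel_column_le: "(\<integral>\<^sup>+x. ennreal (kernel x t) \<partial>lborel) \<le> ennreal kernel_mass"
proof -
  have "(\<integral>\<^sup>+x. ennreal (kernel x t) \<partial>lborel) \<le> (\<integral>\<^sup>+x. ennreal (majorant (t - x)) \<partial>lborel)"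
    using kernel_le_majorant by (intro nn_integral_mono ennreal_leI) simp
  also have "\<dots> = (\<integral>\<^sup>+s. ennreal (majorant s) \<partial>lborel)"
    using nn_integral_real_affine[of "\<lambda>s. ennreal (majorant s)" "- 1" t] by simp
  also have "\<dots> = ennreal kernel_mass"
    using integrable_majorant majorant_nonneg integral_majorant
    by (subst nn_integral_eq_integral) auto
  finally show ?thesis .
qed

lemma resolv_eq_kernel_integral: "resolv q lam f x = (\<integral>t. kernel x t * f t \<partial>lborel)"
proof -
  have integrand: "indicator {x..} t *\<^sub>R (exp (- (LINT \<xi>:{x..t}|lborel. q \<xi> + lam)) * f t)
      = kernel x t * f t" for t
    using primitive_diff[of x t] by (cases "x \<le> t") (simp_all add: kernel_def)
  show ?thesis
    unfolding resolv_def set_lebesgue_integral_def[of lborel "{x..}"]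
    by (intro Bochner_Integration.integral_cong refl integrand)
qed

lemma kernel_factor:
  assumes "x1 \<le> x"
  shows "kernel x t = exp (primitive x - primitive x1) * (indicator {x..} t * kernel x1 t)"
  using assms by (simp add: kernel_def indicator_def mult_exp_exp)

lemma isCont_kernel_integral:
  assumes [measurable]: "f \<in> borel_measurable borel"
    and Kf_int: "\<And>x. integrable lborel (\<lambda>t. kernel x t * f t)"
  shows "isCont (\<lambda>x. \<integral>t. kernel x t * f t \<partial>lborel) x0"
proof -
  \<comment> \<open>t \<mapsto> exp (- primitive t) * f t need not be integrable, so factor through a fixed x1 < x0\<close>
  define x1 where "x1 = x0 - 1"
  have "isCont (\<lambda>x. exp (primitive x - primitive x1) * (\<integral>t. indicator {x..} t * (kernel x1 t * f t) \<partial>lborel)) x0"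
    by (intro continuous_intros isCont_primitive isCont_integral_indicator_atLeast Kf_int)
  moreover have "eventually (\<lambda>x. x \<in> {x1<..}) (nhds x0)"
    unfolding x1_def by (rule eventually_nhds_in_open) auto
  then have "eventually (\<lambda>x. (\<integral>t. kernel x t * f t \<partial>lborel)
      = exp (primitive x - primitive x1) * (\<integral>t. indicator {x..} t * (kernel x1 t * f t) \<partial>lborel)) (nhds x0)"
  proof eventually_elim
    case (elim x)
    then have "x1 \<le> x" by simp
    have "(\<integral>t. kernel x t * f t \<partial>lborel)
        = (\<integral>t. exp (primitive x - primitive x1) * (indicator {x..} t * (kernel x1 t * f t)) \<partial>lborel)"
      by (intro Bochner_Integration.integral_cong refl) (simp add: kernel_factor[OF \<open>x1 \<le> x\<close>])
    then show ?case by simp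
  qed
  ultimately show ?thesis by (subst isCont_cong) auto
qed

lemma resolv_Lp_bound:
  assumes "p \<ge> 1" and "in_Lp p f"
  shows "in_Lp p (resolv q lam f) \<and> Lp_norm p (resolv q lam f) \<le> kernel_mass * Lp_norm p f"
  using Lp_norm_kernel_operator_le[OF kernel_measurable kernel_nonneg kernel_le_one integrable_kernel
      integral_kernel_le nn_integral_kernel_column_le kernel_mass_pos assms]
  by (simp add: resolv_eq_kernel_integral[abs_def])

lemma resolv_Cb_bound:
  assumes "in_Cb f"
  shows "in_Cb (resolv q lam f) \<and> sup_norm (resolv q lam f) \<le> kernel_mass * sup_norm f"
proof -
  have "continuous_on UNIV f" and "bounded (range f)" using assms unfolding in_Cb_def by auto
  then have [measurable]: "f \<in> borel_measurable borel" by (intro borel_measurable_continuous_onI)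
  obtain B where "\<And>t. \<bar>f t\<bar> \<le> B" using \<open>bounded (range f)\<close> unfolding bounded_iff by auto
  then have f_bound: "\<bar>f t\<bar> \<le> sup_norm f" for t
    unfolding sup_norm_def by (intro cSUP_upper bdd_aboveI2) auto
  define R where "R x = (\<integral>t. kernel x t * f t \<partial>lborel)" for x
  have Kf_int: "integrable lborel (\<lambda>t. kernel x t * f t)" and R_bound: "\<bar>R x\<bar> \<le> kernel_mass * sup_norm f" for x
    using kernel_integral_bounded[of kernel x f kernel_mass "sup_norm f"]
      kernel_nonneg integrable_kernel integral_kernel_le f_bound
    unfolding R_def by auto
  have "continuous_on UNIV R"
    unfolding R_def using isCont_kernel_integral[OF _ Kf_int]
    by (simp add: continuous_on_eq_continuous_at)
  moreover have "bounded (range R)" unfolding bounded_iff using R_bound by auto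
  moreover have "sup_norm R \<le> kernel_mass * sup_norm f"
    unfolding sup_norm_def[of R] by (intro cSUP_least R_bound) auto
  moreover have "resolv q lam f = R" by (simp add: resolv_eq_kernel_integral R_def fun_eq_iff)
  ultimately show ?thesis unfolding in_Cb_def by simp
qed

end

theorem lemma6p2:
  fixes q :: "real \<Rightarrow> real" and a lam :: real
  assumes q_nonneg: "\<forall>x. q x \<ge> 0"
    and q_loc: "\<forall>s t. set_integrable lborel {s..t} q"
    and a_pos: "a > 0"
    and q_inf: "(INF x. (LINT t:{x-a..x+a}|lborel. q t)) > 0"
    and lam_pos: "lam > 0"
  shows "\<exists>\<delta>>0.
     (\<forall>p\<ge>1. \<forall>f. in_Lp p f \<longrightarrow>
         in_Lp p (resolv q lam f) \<and> Lp_norm p (resolv q lam f) \<le> Lp_norm p f / (lam + \<delta>))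
   \<and> (\<forall>f. in_Cb f \<longrightarrow>
         in_Cb (resolv q lam f) \<and> sup_norm (resolv q lam f) \<le> sup_norm f / (lam + \<delta>))"
proof -
  interpret uniformly_positive_potential q a lam
    using assms by unfold_locales auto
  define \<delta> where "\<delta> = 1 / kernel_mass - lam"
  have "\<delta> > 0"
    using kernel_mass_less kernel_mass_pos lam_pos unfolding \<delta>_def by (simp add: field_simps)
  moreover have "x / (lam + \<delta>) = kernel_mass * x" for x
    unfolding \<delta>_def by simp
  ultimately show ?thesis
    using resolv_Lp_bound resolv_Cb_bound by auto
qed

end
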